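(* Let $G$ be a finite group of even order which is not a $p$-group for any prime $p$. Then the co-prime graph $\Gamma_{CP}(G)$ is not minimally edge connected.
   Context: The co-prime graph $\Gamma_{CP}(G)$ of a finite group $G$ is the simple undirected graph with vertex set $G$ in which two distinct elements $x,y$ are adjacent if and only if $\gcd(o(x),o(y))=1$. A $p$-group is a group of order $p^n$ for a prime $p$. For a connected graph $\Gamma$, an edge cut-set is a set $S$ of edges such that $\Gamma-S$ is disconnected or has just one vertex, and the edge connectivity $\kappa'(\Gamma)$ is the smallest size of an edge cut-set. $\Gamma$ is minimally edge connected if $\kappa'(\Gamma-\epsilon)=\kappa'(\Gamma)-1$ for every edge $\epsilon$ of $\Gamma$. *)

theory Defs
  imports "HOL-Algebra.Algebra" "HOL-Computational_Algebra.Primes"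
begin

text \<open>Simple undirected graphs are given by a vertex set V and a set E of
  2-element subsets of V (edges).\<close>

definition graph_connected :: "'a set \<Rightarrow> 'a set set \<Rightarrow> bool" where
  "graph_connected V E \<longleftrightarrow>
     (\<forall>u\<in>V. \<forall>v\<in>V. (u, v) \<in> {(x, y). {x, y} \<in> E}\<^sup>*)"

definition edge_cut_set :: "'a set \<Rightarrow> 'a set set \<Rightarrow> 'a set set \<Rightarrow> bool" where
  "edge_cut_set V E S \<longleftrightarrow>
     S \<subseteq> E \<and> (\<not> graph_connected V (E - S) \<or> card V = 1)"

definition edge_connectivity :: "'a set \<Rightarrow> 'a set set \<Rightarrow> nat" where
  "edge_connectivity V E = (LEAST k. \<exists>S. edge_cut_set V E S \<and> card S = k)"

definition minimally_edge_connected :: "'a set \<Rightarrow> 'a set set \<Rightarrow> bool" where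
  "minimally_edge_connected V E \<longleftrightarrow>
     graph_connected V E \<and>
     (\<forall>e\<in>E. edge_connectivity V (E - {e}) = edge_connectivity V E - 1)"

definition coprime_graph_edges :: "('a, 'b) monoid_scheme \<Rightarrow> 'a set set" where
  "coprime_graph_edges G =
     {{x, y} | x y. x \<in> carrier G \<and> y \<in> carrier G \<and> x \<noteq> y \<and>
        coprime (group.ord G x) (group.ord G y)}"

definition is_p_group :: "('a, 'b) monoid_scheme \<Rightarrow> bool" where
  "is_p_group G \<longleftrightarrow> (\<exists>p n. Factorial_Ring.prime (p::nat) \<and> order G = p ^ n)"

end

theory Submission
  imports Defs
begin

text \<open>The identity is adjacent to every other vertex of the co-prime graph. In a graph with
  such a dominating vertex \<open>x\<close>, deleting an edge \<open>xy\<close> whose end \<open>y\<close> has more than the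
  minimum degree \<open>\<delta>\<close> does not lower the edge connectivity, which is at most \<open>\<delta>\<close>: a minimum
  cut \<open>S\<close> of the smaller graph either already cuts the whole graph, or it separates a set \<open>B\<close>
  containing \<open>y\<close> but not \<open>x\<close>, and then every vertex of \<open>B\<close> has a neighbour outside \<open>B\<close>, so
  counting degrees shows that more than \<open>\<delta>\<close> edges, all in \<open>S \<union> {xy}\<close>, leave \<open>B\<close>.

  So it suffices to find two non-identity vertices of different degrees. An involution \<open>w\<close> is
  adjacent exactly to the elements of odd order, and an element \<open>z\<close> of odd prime order \<open>q\<close>
  (which exists as \<open>G\<close> is not a 2-group) exactly to the elements of order prime to \<open>q\<close>.
  Inversion pairs up the elements of both sets except the self-inverse ones, so the first set
  has odd size (only the identity is fixed) and the second has the parity of the number of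
  elements of order at most 2, which is that of \<open>|G|\<close>, hence even.\<close>

definition adj :: "'a set set \<Rightarrow> ('a \<times> 'a) set" where
  "adj E = {(x, y). {x, y} \<in> E}"

definition neighbours :: "'a set set \<Rightarrow> 'a \<Rightarrow> 'a set" where
  "neighbours E v = {u. {v, u} \<in> E}"

definition simple_graph :: "'a set \<Rightarrow> 'a set set \<Rightarrow> bool" where
  "simple_graph V E \<longleftrightarrow> (\<forall>e\<in>E. \<exists>a b. e = {a, b} \<and> a \<in> V \<and> b \<in> V \<and> a \<noteq> b)"

lemma graph_connected_adj:
  "graph_connected V E \<longleftrightarrow> (\<forall>u\<in>V. \<forall>v\<in>V. (u, v) \<in> (adj E)\<^sup>*)"
  unfolding graph_connected_def adj_def ..

lemma sym_adj: "sym (adj E)"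
  by (auto simp: adj_def sym_def insert_commute)

lemma adj_mono: "E \<subseteq> F \<Longrightarrow> adj E \<subseteq> adj F"
  unfolding adj_def by blast

lemma simple_graph_finite_edges:
  assumes "simple_graph V E" "finite V"
  shows "finite E"
proof -
  have "E \<subseteq> Pow V"
  proof
    fix e assume "e \<in> E"
    then obtain a b where "e = {a, b}" "a \<in> V" "b \<in> V"
      using assms(1) unfolding simple_graph_def by blast
    then show "e \<in> Pow V" by simp
  qed
  then show ?thesis
    using assms(2) by (meson finite_Pow_iff finite_subset)
qed

lemma neighbours_subset: "simple_graph V E \<Longrightarrow> neighbours E v \<subseteq> V"
  unfolding simple_graph_def neighbours_def by (fastforce simp: doubleton_eq_iff)

lemma not_in_neighbours: "simple_graph V E \<Longrightarrow> v \<notin> neighbours E v"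
  unfolding simple_graph_def neighbours_def by (fastforce simp: doubleton_eq_iff)

lemma finite_neighbours: "simple_graph V E \<Longrightarrow> finite V \<Longrightarrow> finite (neighbours E v)"
  using neighbours_subset finite_subset by metis

lemma not_graph_connected_if_isolated:
  assumes "u \<in> V" "v \<in> V" "u \<noteq> v" "\<forall>e\<in>E. v \<notin> e"
  shows "\<not> graph_connected V E"
proof
  assume "graph_connected V E"
  then have "(v, u) \<in> (adj E)\<^sup>*"
    using assms(1,2) unfolding graph_connected_adj by blast
  then obtain w where "(v, w) \<in> adj E"
    using assms(3) by (metis converse_rtranclE)
  then show False
    using assms(4) unfolding adj_def by blast
qed

lemma card_ne_1_if_distinct: "u \<in> V \<Longrightarrow> v \<in> V \<Longrightarrow> u \<noteq> v \<Longrightarrow> card V \<noteq> 1"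
  by (metis card_1_singletonE singletonD)

lemma edge_cut_set_all_edges:
  assumes "u \<in> V" "v \<in> V" "u \<noteq> v"
  shows "edge_cut_set V E E"
  using not_graph_connected_if_isolated[OF assms] unfolding edge_cut_set_def by blast

lemma edge_connectivity_le: "edge_cut_set V E S \<Longrightarrow> edge_connectivity V E \<le> card S"
  unfolding edge_connectivity_def by (rule Least_le) blast

lemma edge_connectivity_attained:
  assumes "u \<in> V" "v \<in> V" "u \<noteq> v"
  obtains S where "edge_cut_set V E S" "card S = edge_connectivity V E"
proof -
  have "\<exists>k S. edge_cut_set V E S \<and> card S = k"
    using edge_cut_set_all_edges[OF assms] by blast
  then have "\<exists>S. edge_cut_set V E S \<and> card S = edge_connectivity V E"
    unfolding edge_connectivity_def by (rule LeastI_ex)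
  then show ?thesis
    using that by blast
qed

lemma edge_connectivity_pos:
  assumes "u \<in> V" "v \<in> V" "u \<noteq> v" "finite V" "simple_graph V E" "graph_connected V E"
  shows "edge_connectivity V E > 0"
proof (rule ccontr)
  assume "\<not> ?thesis"
  then obtain S where S: "edge_cut_set V E S" "card S = 0"
    using edge_connectivity_attained[OF assms(1-3)] by (metis gr0I)
  have "finite E"
    using simple_graph_finite_edges assms(4,5) by blast
  then have "S = {}"
    using S unfolding edge_cut_set_def by (meson card_0_eq finite_subset)
  then show False
    using S(1) assms(6) card_ne_1_if_distinct[OF assms(1-3)] unfolding edge_cut_set_def by simp
qed

lemma edge_connectivity_le_degree:
  assumes "u \<in> V" "v \<in> V" "u \<noteq> v" "finite V" "simple_graph V E"
  shows "edge_connectivity V E \<le> card (neighbours E v)"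
proof -
  let ?Sv = "{e\<in>E. v \<in> e}"
  have "edge_cut_set V E ?Sv"
    using not_graph_connected_if_isolated[OF assms(1-3), of "E - ?Sv"]
    unfolding edge_cut_set_def by blast
  moreover have "?Sv \<subseteq> (\<lambda>u. {v, u}) ` neighbours E v"
    using assms(5) unfolding simple_graph_def neighbours_def
    by (auto simp: image_iff doubleton_eq_iff insert_commute)
  then have "card ?Sv \<le> card (neighbours E v)"
    using finite_neighbours[OF assms(5,4)] by (meson card_image_le card_mono finite_imageI le_trans)
  ultimately show ?thesis
    using edge_connectivity_le le_trans by blast
qed

lemma rtrancl_adj_insert_edge:
  assumes "(x, y) \<in> (adj F)\<^sup>*"
  shows "(adj (insert {x, y} F))\<^sup>* = (adj F)\<^sup>*"
proof
  have "(y, x) \<in> (adj F)\<^sup>*"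
    using assms sym_rtrancl[OF sym_adj, of F] unfolding sym_def by blast
  then have "adj (insert {x, y} F) \<subseteq> (adj F)\<^sup>*"
    using assms by (auto simp: adj_def doubleton_eq_iff)
  then show "(adj (insert {x, y} F))\<^sup>* \<subseteq> (adj F)\<^sup>*"
    by (metis rtrancl_subset_rtrancl)
  show "(adj F)\<^sup>* \<subseteq> (adj (insert {x, y} F))\<^sup>*"
    by (simp add: adj_mono rtrancl_mono subset_insertI)
qed

text \<open>Either \<open>|B| > \<delta>\<close>, or every \<open>g u\<close> is at least \<open>c = \<delta> + 1 - |B| \<ge> 1\<close> and then
  \<open>\<Sum> g \<ge> (|B| - 1) c + c + 1 \<ge> |B| + c = \<delta> + 1\<close>.\<close>
lemma sum_outside_degrees_gt:
  fixes g :: "'a \<Rightarrow> nat"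
  assumes "finite B" "y \<in> B"
    and "\<forall>u\<in>B. g u \<ge> 1" "\<forall>u\<in>B. g u + (card B - 1) \<ge> \<delta>"
    and "g y + (card B - 1) \<ge> \<delta> + 1"
  shows "(\<Sum>u\<in>B. g u) \<ge> \<delta> + 1"
proof (cases "card B \<ge> \<delta> + 1")
  case True
  then show ?thesis
    using sum_bounded_below[of B 1 g] assms(3) by simp
next
  case False
  define c where "c = \<delta> + 1 - card B"
  define b where "b = card B - 1"
  have B: "card B = b + 1"
    using assms(1,2) unfolding b_def by (metis One_nat_def Suc_leI card_gt_0_iff empty_iff le_add_diff_inverse2)
  have "c \<ge> 1"
    using False unfolding c_def by simp
  have "c \<le> g u" if "u \<in> B" for u
    using assms(4) that B unfolding c_def b_def by fastforce
  then have "b * c \<le> (\<Sum>u\<in>B - {y}. g u)"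
    using sum_bounded_below[of "B - {y}" c g] assms(1,2) B unfolding b_def by simp
  moreover have "g y \<ge> c + 1"
    using assms(5) B False unfolding c_def b_def by simp
  ultimately have "(\<Sum>u\<in>B. g u) \<ge> b * c + c + 1"
    using assms(1,2) by (simp add: sum.remove)
  moreover have "b * c \<ge> b"
    using \<open>c \<ge> 1\<close> by simp
  ultimately show ?thesis
    using False B unfolding c_def by linarith
qed

lemma sum_outside_degrees_le_card:
  assumes "simple_graph V E" "finite V" "B \<subseteq> V" "finite F"
    and "\<forall>u\<in>B. \<forall>h\<in>neighbours E u - B. {u, h} \<in> F"
  shows "(\<Sum>u\<in>B. card (neighbours E u - B)) \<le> card F"
proof -
  let ?P = "Sigma B (\<lambda>u. neighbours E u - B)"
  have "inj_on (\<lambda>(u, h). {u, h}) ?P"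
    by (auto intro!: inj_onI simp: doubleton_eq_iff)
  moreover have "(\<lambda>(u, h). {u, h}) ` ?P \<subseteq> F"
    using assms(5) by auto
  ultimately have "card ?P \<le> card F"
    using assms(4) card_inj_on_le by blast
  moreover have "finite B"
    using assms(2,3) finite_subset by blast
  ultimately show ?thesis
    using finite_neighbours[OF assms(1,2)] by (simp add: card_SigmaI)
qed

lemma edge_connectivity_le_delete_edge:
  assumes graph: "finite V" "simple_graph V E"
    and x: "x \<in> V" "\<forall>u\<in>V - {x}. {x, u} \<in> E"
    and y: "y \<in> V" "y \<noteq> x"
    and min_degree: "\<forall>u\<in>V. \<delta> \<le> card (neighbours E u)"
    and y_degree: "\<delta> < card (neighbours E y)"
    and connectivity_le: "edge_connectivity V E \<le> \<delta>"
  shows "edge_connectivity V E \<le> edge_connectivity V (E - {{x, y}})"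
proof -
  obtain S where S: "edge_cut_set V (E - {{x, y}}) S"
    "card S = edge_connectivity V (E - {{x, y}})"
    using edge_connectivity_attained[OF x(1) y(1)] y(2) by metis
  let ?F = "E - {{x, y}} - S"
  have S_sub: "S \<subseteq> E - {{x, y}}" and disconnected: "\<not> graph_connected V ?F"
    using S(1) card_ne_1_if_distinct[OF x(1) y(1)] y(2) unfolding edge_cut_set_def by auto
  have "finite S"
    using S_sub simple_graph_finite_edges[OF graph(2,1)] finite_subset by blast
  show ?thesis
  proof (cases "(x, y) \<in> (adj ?F)\<^sup>*")
    case True
    have "adj (E - S) \<subseteq> adj (insert {x, y} ?F)"
      by (rule adj_mono) blast
    then have "(adj (E - S))\<^sup>* \<subseteq> (adj ?F)\<^sup>*"
      using rtrancl_adj_insert_edge[OF True] by (metis rtrancl_mono)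
    then have "\<not> graph_connected V (E - S)"
      using disconnected unfolding graph_connected_adj by blast
    then have "edge_cut_set V E S"
      using S_sub unfolding edge_cut_set_def by blast
    then show ?thesis
      using S(2) edge_connectivity_le by fastforce
  next
    case False
    define B where "B = {u \<in> V. (y, u) \<in> (adj ?F)\<^sup>*}"
    have "x \<notin> B"
      using False sym_rtrancl[OF sym_adj, of ?F] unfolding B_def sym_def by blast
    have "y \<in> B" "B \<subseteq> V" "finite B"
      using y(1) graph(1) finite_subset unfolding B_def by auto
    let ?g = "\<lambda>u. card (neighbours E u - B)"
    have leaving: "{u, h} \<in> insert {x, y} S" if "u \<in> B" "h \<in> neighbours E u - B" for u h
    proof (rule ccontr)
      assume "{u, h} \<notin> insert {x, y} S"
      then have "(u, h) \<in> adj ?F"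
        using that(2) unfolding adj_def neighbours_def by blast
      then have "(y, h) \<in> (adj ?F)\<^sup>*"
        using that(1) unfolding B_def by (blast intro: rtrancl_into_rtrancl)
      then show False
        using that neighbours_subset[OF graph(2)] unfolding B_def by blast
    qed
    have "(\<Sum>u\<in>B. ?g u) \<le> card (insert {x, y} S)"
      using sum_outside_degrees_le_card[OF graph(2,1) \<open>B \<subseteq> V\<close>] leaving \<open>finite S\<close> by blast
    also have "\<dots> \<le> card S + 1"
      using \<open>finite S\<close> by (simp add: card_insert_if)
    finally have sum_le: "(\<Sum>u\<in>B. ?g u) \<le> card S + 1" .
    have outside_neighbour: "\<forall>u\<in>B. ?g u \<ge> 1"
    proof
      fix u assume "u \<in> B"
      have "{x, u} \<in> E"
        using x(2) \<open>u \<in> B\<close> \<open>B \<subseteq> V\<close> \<open>x \<notin> B\<close> by blast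
      then have "x \<in> neighbours E u - B"
        using \<open>x \<notin> B\<close> unfolding neighbours_def by (simp add: insert_commute)
      moreover have "finite (neighbours E u - B)"
        using finite_neighbours[OF graph(2,1)] by blast
      ultimately show "?g u \<ge> 1"
        by (metis One_nat_def Suc_leI card_gt_0_iff empty_iff)
    qed
    have degree_le: "card (neighbours E u) \<le> ?g u + (card B - 1)" if "u \<in> B" for u
    proof -
      have "neighbours E u \<subseteq> (neighbours E u - B) \<union> (B - {u})"
        using not_in_neighbours[OF graph(2), of u] by blast
      then have "card (neighbours E u) \<le> card ((neighbours E u - B) \<union> (B - {u}))"
        using finite_neighbours[OF graph(2,1), of u] \<open>finite B\<close> by (simp add: card_mono)
      also have "\<dots> \<le> ?g u + card (B - {u})"
        by (rule card_Un_le)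
      finally show ?thesis
        using that \<open>finite B\<close> by simp
    qed
    then have "\<forall>u\<in>B. \<delta> \<le> ?g u + (card B - 1)"
      using min_degree \<open>B \<subseteq> V\<close> by (meson le_trans subsetD)
    moreover have "\<delta> + 1 \<le> ?g y + (card B - 1)"
      using degree_le[OF \<open>y \<in> B\<close>] y_degree by linarith
    ultimately have "\<delta> + 1 \<le> (\<Sum>u\<in>B. ?g u)"
      by (intro sum_outside_degrees_gt[OF \<open>finite B\<close> \<open>y \<in> B\<close> outside_neighbour])
    then show ?thesis
      using sum_le S(2) connectivity_le by linarith
  qed
qed

lemma not_minimally_edge_connected_if_dominating_vertex:
  assumes graph: "finite V" "simple_graph V E"
    and x: "x \<in> V" "\<forall>u\<in>V - {x}. {x, u} \<in> E"
    and w: "w \<in> V - {x}" and z: "z \<in> V - {x}"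
    and degrees: "card (neighbours E w) \<noteq> card (neighbours E z)"
  shows "\<not> minimally_edge_connected V E"
proof
  assume minimal: "minimally_edge_connected V E"
  define \<delta> where "\<delta> = Min ((\<lambda>v. card (neighbours E v)) ` V)"
  have min_degree: "\<forall>u\<in>V. \<delta> \<le> card (neighbours E u)"
    unfolding \<delta>_def using graph(1) by simp
  obtain v where v: "v \<in> V" "card (neighbours E v) = \<delta>"
    using Min_in[of "(\<lambda>v. card (neighbours E v)) ` V"] graph(1) x(1) unfolding \<delta>_def by fastforce
  obtain y where y: "y \<in> V - {x}" "\<delta> < card (neighbours E y)"
    using w z degrees min_degree by (metis DiffD1 le_neq_implies_less)
  have "edge_connectivity V E \<le> \<delta>"
    using edge_connectivity_le_degree[OF _ v(1) _ graph] v(2) y(1) x(1) by (metis DiffE insertI1)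
  then have "edge_connectivity V E \<le> edge_connectivity V (E - {{x, y}})"
    using edge_connectivity_le_delete_edge[OF graph x _ _ min_degree] y by blast
  moreover have "edge_connectivity V (E - {{x, y}}) = edge_connectivity V E - 1"
    using x(2) y(1) minimal unfolding minimally_edge_connected_def by blast
  moreover have "edge_connectivity V E > 0"
    using edge_connectivity_pos[OF x(1) _ _ graph] y(1) minimal
    unfolding minimally_edge_connected_def by blast
  ultimately show False
    by linarith
qed

lemma even_card_fixpoint_free_involution:
  assumes "finite Y" "\<forall>x\<in>Y. f x \<in> Y \<and> f (f x) = x \<and> f x \<noteq> x"
  shows "even (card Y)"
  using assms
proof (induction "card Y" arbitrary: Y rule: less_induct)
  case less
  show ?case
  proof (cases "Y = {}")
    case False
    then obtain x where x: "x \<in> Y" "f x \<in> Y" "f x \<noteq> x"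
      using less.prems(2) by blast
    define Y' where "Y' = Y - {x, f x}"
    have card_Y: "card Y = card Y' + 2"
      using x less.prems(1) card_Diff_subset[of "{x, f x}" Y] card_mono[of Y "{x, f x}"]
      unfolding Y'_def by auto
    have "\<forall>u\<in>Y'. f u \<in> Y' \<and> f (f u) = u \<and> f u \<noteq> u"
      using less.prems(2) x(1) unfolding Y'_def by (metis Diff_iff insertCI insertE singletonD)
    then have "even (card Y')"
      using less.hyps[of Y'] less.prems(1) card_Y unfolding Y'_def by simp
    then show ?thesis
      using card_Y by simp
  qed simp
qed

lemma even_card_iff_even_card_fixpoints:
  assumes "finite W" "\<forall>x\<in>W. f x \<in> W \<and> f (f x) = x"
  shows "even (card W) \<longleftrightarrow> even (card {x\<in>W. f x = x})"
proof -
  let ?F = "{x\<in>W. f x = x}"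
  have "\<forall>x\<in>W - ?F. f x \<in> W - ?F \<and> f (f x) = x \<and> f x \<noteq> x"
    using assms(2) by (metis (mono_tags, lifting) Diff_iff mem_Collect_eq)
  then have "even (card (W - ?F))"
    by (rule even_card_fixpoint_free_involution[OF finite_Diff[OF assms(1)]])
  moreover have "card W = card ?F + card (W - ?F)"
    using assms(1) card_Diff_subset[of ?F W] card_mono[of W ?F] by fastforce
  ultimately show ?thesis
    by simp
qed

lemma power_of_two_if_prime_divisors_two:
  fixes n :: nat
  assumes "n > 0" "\<forall>p. Factorial_Ring.prime p \<longrightarrow> p dvd n \<longrightarrow> p = 2"
  shows "n = 2 ^ multiplicity 2 n"
proof -
  have "prime_factors n \<subseteq> {2}"
    using assms by (auto simp: prime_factors_dvd)
  then consider "prime_factors n = {}" | "prime_factors n = {2}"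
    by blast
  then show ?thesis
  proof cases
    case 1
    then have "n = 1"
      using prime_factorization_nat[OF assms(1)] by simp
    then show ?thesis
      by simp
  next
    case 2
    then show ?thesis
      using prime_factorization_nat[OF assms(1)] by simp
  qed
qed

context group
begin

lemma exists_elem_of_prime_order:
  assumes "finite (carrier G)" "Factorial_Ring.prime p" "p dvd order G"
  obtains x where "x \<in> carrier G" "ord x = p"
proof -
  obtain k where "order G = p ^ 1 * k"
    using assms(3) by (metis dvdE power_one_right)
  then obtain H where H: "subgroup H G" "card H = p"
    using sylow_thm[OF assms(2) is_group _ assms(1)] by (metis power_one_right)
  then have "H \<noteq> {\<one>}"
    using assms(2) by auto
  then obtain x where x: "x \<in> H" "x \<noteq> \<one>"
    using subgroup.one_closed[OF H(1)] by blast
  have "x [^] p = \<one>"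
    using group.pow_order_eq_1[OF subgroup.subgroup_is_group[OF H(1) is_group]] x(1) H(2)
    by (simp add: nat_pow_def order_def)
  then have "ord x dvd p"
    using pow_eq_id subgroup.mem_carrier[OF H(1) x(1)] by blast
  moreover have "ord x \<noteq> 1"
    using ord_eq_1 subgroup.mem_carrier[OF H(1) x(1)] x(2) by blast
  ultimately show ?thesis
    using that subgroup.mem_carrier[OF H(1) x(1)] assms(2) unfolding prime_nat_iff by blast
qed

lemma ord_dvd_2_if_inv_eq: "u \<in> carrier G \<Longrightarrow> inv u = u \<Longrightarrow> ord u dvd 2"
  by (metis pow_eq_id r_inv numeral_2_eq_2 nat_pow_Suc nat_pow_0 l_one)

lemma coprime_graph_edge_iff:
  "{u, v} \<in> coprime_graph_edges G \<longleftrightarrow>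
     u \<in> carrier G \<and> v \<in> carrier G \<and> u \<noteq> v \<and> coprime (ord u) (ord v)"
  unfolding coprime_graph_edges_def by (auto simp: doubleton_eq_iff coprime_commute)

lemma simple_graph_coprime_graph: "simple_graph (carrier G) (coprime_graph_edges G)"
  unfolding simple_graph_def coprime_graph_edges_def by blast

lemma neighbours_coprime_graph_prime_order:
  assumes "v \<in> carrier G" "ord v = p" "Factorial_Ring.prime p"
  shows "neighbours (coprime_graph_edges G) v = {u \<in> carrier G. \<not> p dvd ord u}"
  using assms unfolding neighbours_def coprime_graph_edge_iff
  by (auto simp: prime_imp_coprime_nat dest: prime_nat_iff[THEN iffD1])

lemma even_card_ord_set_iff:
  assumes "finite (carrier G)"
  shows "even (card {u \<in> carrier G. P (ord u)}) \<longleftrightarrow>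
    even (card {u \<in> carrier G. P (ord u) \<and> inv u = u})"
proof -
  have "even (card {u \<in> carrier G. P (ord u)}) \<longleftrightarrow>
      even (card {x \<in> {u \<in> carrier G. P (ord u)}. inv x = x})"
    by (rule even_card_iff_even_card_fixpoints) (simp_all add: assms)
  then show ?thesis
    by (simp add: conj_assoc)
qed

lemma odd_card_odd_order_elements:
  assumes "finite (carrier G)"
  shows "odd (card {u \<in> carrier G. odd (ord u)})"
proof -
  have "{u \<in> carrier G. odd (ord u) \<and> inv u = u} = {\<one>}"
    using ord_dvd_2_if_inv_eq ord_eq_1 by (fastforce dest: dvd_imp_le elim: oddE)
  then show ?thesis
    using even_card_ord_set_iff[OF assms, of odd] by simp
qed

lemma even_card_order_not_dvd_elements:
  assumes "finite (carrier G)" "even (order G)" "\<not> q dvd 2"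
  shows "even (card {u \<in> carrier G. \<not> q dvd ord u})"
proof -
  have "{u \<in> carrier G. \<not> q dvd ord u \<and> inv u = u} = {u \<in> carrier G. True \<and> inv u = u}"
    using ord_dvd_2_if_inv_eq assms(3) dvd_trans by blast
  moreover have "even (card {u \<in> carrier G. True \<and> inv u = u})"
    using even_card_ord_set_iff[OF assms(1), of "\<lambda>_. True"] assms(2) unfolding order_def by simp
  ultimately show ?thesis
    using even_card_ord_set_iff[OF assms(1), of "\<lambda>n. \<not> q dvd n"] by simp
qed

end

theorem mainTheorem12:
  fixes G :: "('a, 'b) monoid_scheme"
  assumes "group G"
    and "finite (carrier G)"
    and "even (order G)"
    and "\<not> is_p_group G"
  shows "\<not> minimally_edge_connected (carrier G) (coprime_graph_edges G)"
proof -
  interpret group G by fact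
  let ?E = "coprime_graph_edges G"
  obtain w where w: "w \<in> carrier G" "ord w = 2"
    using exists_elem_of_prime_order[OF assms(2) two_is_prime_nat] assms(3) by blast
  have "\<not> (\<forall>p. Factorial_Ring.prime p \<longrightarrow> p dvd order G \<longrightarrow> p = 2)"
    using power_of_two_if_prime_divisors_two[of "order G"] assms(2,4) two_is_prime_nat
    unfolding is_p_group_def order_gt_0_iff_finite by blast
  then obtain q where q: "Factorial_Ring.prime q" "q dvd order G" "\<not> q dvd 2"
    using primes_dvd_imp_eq[OF _ two_is_prime_nat] by blast
  obtain z where z: "z \<in> carrier G" "ord z = q"
    using exists_elem_of_prime_order[OF assms(2) q(1,2)] by blast
  have "odd (card (neighbours ?E w))"
    using neighbours_coprime_graph_prime_order[OF w two_is_prime_nat]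
      odd_card_odd_order_elements[OF assms(2)] by simp
  moreover have "even (card (neighbours ?E z))"
    using neighbours_coprime_graph_prime_order[OF z q(1)]
      even_card_order_not_dvd_elements[OF assms(2,3) q(3)] by simp
  moreover have "\<forall>u\<in>carrier G - {\<one>\<^bsub>G\<^esub>}. {\<one>\<^bsub>G\<^esub>, u} \<in> ?E"
    by (auto simp: coprime_graph_edge_iff ord_eq_1)
  moreover have "w \<noteq> \<one>\<^bsub>G\<^esub>" "z \<noteq> \<one>\<^bsub>G\<^esub>"
    using w z q(1) ord_eq_1 by auto
  ultimately show ?thesis
    using not_minimally_edge_connected_if_dominating_vertex[OF assms(2)
        simple_graph_coprime_graph one_closed, of w z] w(1) z(1) by fastforce
qed
end
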